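(* There is a constant $C(m,\tau,\gamma,\beta,d)$ such that the following holds. Let $\Theta\subseteq\mathbb Z^{Nd}$ be symmetric, let $\ell\ge1$, $L=\ell^\gamma$, and let $\Lambda_\ell=\Lambda_\ell^{(N)}(\mathbf a)\subseteq\Theta$ be $m$-localizing for $H$. Let $\psi:\Theta\to\mathbb R$ be a generalized eigenfunction of $H_\Theta$ with generalized eigenvalue $\mu$. Assume $$\operatorname{dist}(\mu,\sigma(H_{\Lambda_\ell}))\ge\tfrac12e^{-L^\beta}\quad\text{and}\quad \ell\ge C(m,\tau,\gamma,\beta,d)\,(N\log(2+N))^{1/\tau}.$$ Then, with $m'=m(1-3\ell^{-\frac{1-\tau}{2}})$ and $\widetilde\tau=(1+\tau)/2$, for all $\mathbf y\in\Lambda_\ell^{\Theta,\ell^{\widetilde\tau}}$, $$|\psi(\mathbf y)|\le\max_{\mathbf v\in\partial^\Theta_{ex}\Lambda_\ell}e^{-m' d_S(\mathbf y,\mathbf v)}|\psi(\mathbf v)|.$$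
   Context: Fix $\beta,\tau\in(0,1)$, $\gamma>1$ with $\beta<\gamma^{-1}<1<\gamma<2$ and $\max(\gamma\beta,\gamma^{-1})<\tau<1$; $m>0$, $d,N\ge1$. Points of $\mathbb Z^{Nd}$ are $\mathbf x=(x_1,\dots,x_N)$, $x_j\in\mathbb Z^d$; $d_S(\mathbf x,\mathbf y)=\min_{\pi\in S_N}\|\mathbf x-\pi\mathbf y\|_\infty$ with $\pi\mathbf y=(y_{\pi(1)},\dots,y_{\pi(N)})$; $d_S(\mathbf x,A)=\min_{\mathbf y\in A}d_S(\mathbf x,\mathbf y)$. Symmetric = invariant under all permutations. $\Lambda_\ell^{(N)}(\mathbf a)=\{\mathbf x:d_S(\mathbf x,\mathbf a)\le\ell\}$. $H=-\Delta^{(N)}+\lambda V+U$ on $\ell^2(\mathbb Z^{Nd})$, $(\Delta^{(N)}\varphi)(\mathbf x)=\sum_{\|\mathbf y-\mathbf x\|_1=1}\varphi(\mathbf y)$, $V(\mathbf x)=\sum_j\mathcal V(x_j)$, $U(\mathbf x)=\sum_{i<j}\mathcal U(x_i-x_j)$ (any fixed real-valued $\mathcal V$, finitely supported $\mathcal U$, $\lambda>0$). $H_\Theta=1_\Theta H1_\Theta$ on $\ell^2(\Theta)$. A generalized eigenfunction of $H_\Theta$ with generalized eigenvalue $\mu$ is a function $\psi$ on $\Theta$ with $(H_\Theta\psi)(\mathbf x)=\mu\psi(\mathbf x)$ for all $\mathbf x\in\Theta$. For $\Phi\subseteq\Theta$ symmetric: $\partial^\Theta\Phi=\{(\mathbf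 u,\mathbf v)\in\Phi\times(\Theta\setminus\Phi):d_S(\mathbf u,\mathbf v)=1\}$, $\partial^\Theta_{ex}\Phi=\{\mathbf v\in\Theta\setminus\Phi:\exists\mathbf u,\ (\mathbf u,\mathbf v)\in\partial^\Theta\Phi\}$, and $\Phi^{\Theta,r}=\{\mathbf x\in\Phi:d_S(\mathbf x,\Theta\setminus\Phi)\ge r\}$. Localizing: $\varphi\in\ell^2(\Lambda_\ell)$ is $(\mathbf x,m)$-localizing if $\|\varphi\|_2=1$ and $|\varphi(\mathbf y)|\le e^{-m d_S(\mathbf y,\mathbf x)}$ whenever $\mathbf y\in\Lambda_\ell$, $d_S(\mathbf y,\mathbf x)\ge\ell^\tau$; $m$-localizing if this holds for some $\mathbf x\in\Lambda_\ell$; $\Lambda_\ell$ is $m$-localizing for $H$ if $H_{\Lambda_\ell}$ has an orthonormal eigenbasis of $m$-localizing functions. *)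

theory Defs
  imports "HOL-Analysis.Analysis" "HOL-Combinatorics.Permutations"
begin

text \<open>A point of Z^(N d) is represented as cfg: x j k is coordinate k of particle j,
  with x j k = 0 whenever j >= N or k >= d. A point of Z^d is a function nat => int
  vanishing from index d on.\<close>

type_synonym cfg = "nat \<Rightarrow> nat \<Rightarrow> int"

definition conf :: "nat \<Rightarrow> nat \<Rightarrow> cfg set" where
  "conf N d = {x. \<forall>j k. (N \<le> j \<or> d \<le> k) \<longrightarrow> x j k = 0}"

definition pointsZ :: "nat \<Rightarrow> (nat \<Rightarrow> int) set" where
  "pointsZ d = {z. \<forall>k. d \<le> k \<longrightarrow> z k = 0}"

definition linf :: "nat \<Rightarrow> nat \<Rightarrow> cfg \<Rightarrow> cfg \<Rightarrow> real" where
  "linf N d x y = Max ({0} \<union> {real_of_int \<bar>x j k - y j k\<bar> | j k. j < N \<and> k < d})"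

definition l1 :: "nat \<Rightarrow> nat \<Rightarrow> cfg \<Rightarrow> cfg \<Rightarrow> real" where
  "l1 N d x y = (\<Sum>j<N. \<Sum>k<d. real_of_int \<bar>x j k - y j k\<bar>)"

definition permc :: "(nat \<Rightarrow> nat) \<Rightarrow> cfg \<Rightarrow> cfg" where
  "permc \<pi> y = (\<lambda>j. y (\<pi> j))"

definition dS :: "nat \<Rightarrow> nat \<Rightarrow> cfg \<Rightarrow> cfg \<Rightarrow> real" where
  "dS N d x y = Min {linf N d x (permc \<pi> y) | \<pi>. \<pi> permutes {..<N}}"

definition symmetric_set :: "nat \<Rightarrow> cfg set \<Rightarrow> bool" where
  "symmetric_set N \<Theta> \<longleftrightarrow> (\<forall>x\<in>\<Theta>. \<forall>\<pi>. \<pi> permutes {..<N} \<longrightarrow> permc \<pi> x \<in> \<Theta>)"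

definition box :: "nat \<Rightarrow> nat \<Rightarrow> real \<Rightarrow> cfg \<Rightarrow> cfg set" where
  "box N d l a = {x \<in> conf N d. dS N d x a \<le> l}"

definition bdry_ex :: "nat \<Rightarrow> nat \<Rightarrow> cfg set \<Rightarrow> cfg set \<Rightarrow> cfg set" where
  "bdry_ex N d \<Theta> \<Phi> = {v \<in> \<Theta> - \<Phi>. \<exists>u\<in>\<Phi>. dS N d u v = 1}"

definition inner_part :: "nat \<Rightarrow> nat \<Rightarrow> cfg set \<Rightarrow> cfg set \<Rightarrow> real \<Rightarrow> cfg set" where
  "inner_part N d \<Theta> \<Phi> r = {x \<in> \<Phi>. \<forall>z \<in> \<Theta> - \<Phi>. r \<le> dS N d x z}"

definition Vpot :: "nat \<Rightarrow> ((nat \<Rightarrow> int) \<Rightarrow> real) \<Rightarrow> cfg \<Rightarrow> real" where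
  "Vpot N \<V> x = (\<Sum>j<N. \<V> (x j))"

definition Upot :: "nat \<Rightarrow> ((nat \<Rightarrow> int) \<Rightarrow> real) \<Rightarrow> cfg \<Rightarrow> real" where
  "Upot N \<U> x = (\<Sum>j<N. \<Sum>i<j. \<U> (\<lambda>k. x i k - x j k))"

definition Hrestr :: "nat \<Rightarrow> nat \<Rightarrow> real \<Rightarrow> ((nat \<Rightarrow> int) \<Rightarrow> real) \<Rightarrow> ((nat \<Rightarrow> int) \<Rightarrow> real)
    \<Rightarrow> cfg set \<Rightarrow> (cfg \<Rightarrow> 'a::real_algebra_1) \<Rightarrow> cfg \<Rightarrow> 'a" where
  "Hrestr N d lam \<V> \<U> \<Theta> f x =
     - (\<Sum>y \<in> {y \<in> \<Theta>. l1 N d x y = 1}. f y) + of_real (lam * Vpot N \<V> x + Upot N \<U> x) * f x"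

definition gen_eigenfunction :: "nat \<Rightarrow> nat \<Rightarrow> real \<Rightarrow> ((nat \<Rightarrow> int) \<Rightarrow> real) \<Rightarrow> ((nat \<Rightarrow> int) \<Rightarrow> real)
    \<Rightarrow> cfg set \<Rightarrow> (cfg \<Rightarrow> real) \<Rightarrow> real \<Rightarrow> bool" where
  "gen_eigenfunction N d lam \<V> \<U> \<Theta> \<psi> \<mu> \<longleftrightarrow>
     (\<forall>x\<in>\<Theta>. Hrestr N d lam \<V> \<U> \<Theta> \<psi> x = \<mu> * \<psi> x)"

text \<open>Spectrum of H_Lambda on l^2(Lambda) (Lambda finite): its eigenvalues.\<close>
definition spec_restr :: "nat \<Rightarrow> nat \<Rightarrow> real \<Rightarrow> ((nat \<Rightarrow> int) \<Rightarrow> real) \<Rightarrow> ((nat \<Rightarrow> int) \<Rightarrow> real)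
    \<Rightarrow> cfg set \<Rightarrow> complex set" where
  "spec_restr N d lam \<V> \<U> \<Lambda> =
     {E. \<exists>\<phi> :: cfg \<Rightarrow> complex. (\<exists>x\<in>\<Lambda>. \<phi> x \<noteq> 0) \<and>
          (\<forall>x\<in>\<Lambda>. Hrestr N d lam \<V> \<U> \<Lambda> \<phi> x = E * \<phi> x)}"

definition l2norm :: "cfg set \<Rightarrow> (cfg \<Rightarrow> complex) \<Rightarrow> real" where
  "l2norm \<Lambda> \<phi> = sqrt (\<Sum>x\<in>\<Lambda>. (cmod (\<phi> x))\<^sup>2)"

definition localizing_at :: "nat \<Rightarrow> nat \<Rightarrow> real \<Rightarrow> real \<Rightarrow> real \<Rightarrow> cfg set \<Rightarrow> cfg \<Rightarrow> (cfg \<Rightarrow> complex) \<Rightarrow> bool" where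
  "localizing_at N d \<tau> l m \<Lambda> x \<phi> \<longleftrightarrow> l2norm \<Lambda> \<phi> = 1 \<and>
     (\<forall>y\<in>\<Lambda>. l powr \<tau> \<le> dS N d y x \<longrightarrow> cmod (\<phi> y) \<le> exp (- m * dS N d y x))"

definition localizing_fun :: "nat \<Rightarrow> nat \<Rightarrow> real \<Rightarrow> real \<Rightarrow> real \<Rightarrow> cfg set \<Rightarrow> (cfg \<Rightarrow> complex) \<Rightarrow> bool" where
  "localizing_fun N d \<tau> l m \<Lambda> \<phi> \<longleftrightarrow> (\<exists>x\<in>\<Lambda>. localizing_at N d \<tau> l m \<Lambda> x \<phi>)"

text \<open>Lambda_l(a) is m-localizing for H: H_Lambda has an orthonormal eigenbasis of
  m-localizing functions (functions are represented as vanishing outside Lambda; an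
  orthonormal family of card Lambda elements is a basis of l^2(Lambda)).\<close>
definition localizing_box :: "nat \<Rightarrow> nat \<Rightarrow> real \<Rightarrow> real \<Rightarrow> real \<Rightarrow> ((nat \<Rightarrow> int) \<Rightarrow> real)
    \<Rightarrow> ((nat \<Rightarrow> int) \<Rightarrow> real) \<Rightarrow> real \<Rightarrow> cfg \<Rightarrow> bool" where
  "localizing_box N d \<tau> m lam \<V> \<U> l a \<longleftrightarrow>
     (let \<Lambda> = box N d l a in
      \<exists>B :: (cfg \<Rightarrow> complex) set. finite B \<and> card B = card \<Lambda> \<and>
        (\<forall>\<phi>\<in>B. (\<forall>x. x \<notin> \<Lambda> \<longrightarrow> \<phi> x = 0) \<and>
                (\<exists>E. \<forall>x\<in>\<Lambda>. Hrestr N d lam \<V> \<U> \<Lambda> \<phi> x = E * \<phi> x) \<and>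
                localizing_fun N d \<tau> l m \<Lambda> \<phi>) \<and>
        (\<forall>\<phi>\<in>B. \<forall>\<phi>'\<in>B. \<phi> \<noteq> \<phi>' \<longrightarrow> (\<Sum>x\<in>\<Lambda>. \<phi> x * cnj (\<phi>' x)) = 0))"

end

(* Expand psi on Lambda = Lambda_l(a) in the orthonormal eigenbasis of H_Lambda provided by the
   localization hypothesis: psi(y) = sum_phi <psi, phi> phi(y).  Since psi solves the eigenvalue
   equation on Theta, pairing it with H_Lambda phi = E phi cancels every hop inside Lambda, so
   (conj E - mu) <psi, phi> is a sum of psi(v) conj(phi(u)) over neighbours u in Lambda, v outside,
   and the gap |mu - E| >= exp(-L^beta)/2 bounds each coefficient by such a boundary sum.
   Localization of phi gives |phi(u) phi(y)| <= exp(2 m l^tau - m d_S(y,u)); as y is at distance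
   at least l^((1+tau)/2) from the outside, the weaker rate m' = m (1 - 3 l^(-(1-tau)/2)) allowed
   for psi(v) leaves a spare factor exp(-3 m l^tau).  Altogether |psi(y)| is at most
     |Lambda|^2 3^(Nd) 2 exp(l^(gamma beta)) exp(m - m l^tau) max_v exp(-m' d_S(y,v)) |psi(v)|,
   and since |Lambda| <= N! (2l+1)^(Nd), the prefactor is at most 1 once l^tau >= C' N log(2+N). *)

theory Submission
  imports Defs "HOL-Library.Function_Algebras" "HOL-Real_Asymp.Real_Asymp"
begin

section \<open>Sup-distance and symmetrized distance\<close>

lemma finite_linf_values:
  fixes x y :: cfg
  shows "finite ({0} \<union> {real_of_int \<bar>x j k - y j k\<bar> | j k. j < N \<and> k < d})"
proof -
  have "{real_of_int \<bar>x j k - y j k\<bar> | j k. j < N \<and> k < d} =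
      (\<lambda>(j, k). real_of_int \<bar>x j k - y j k\<bar>) ` ({..<N} \<times> {..<d})"
    by auto
  moreover have "finite ((\<lambda>(j, k). real_of_int \<bar>x j k - y j k\<bar>) ` ({..<N} \<times> {..<d}))"
    by (rule finite_imageI) simp
  ultimately show ?thesis by simp
qed

lemma coord_dist_le_linf: "j < N \<Longrightarrow> k < d \<Longrightarrow> real_of_int \<bar>x j k - y j k\<bar> \<le> linf N d x y"
  unfolding linf_def by (rule Max_ge[OF finite_linf_values]) blast

lemma linf_nonneg: "0 \<le> linf N d x y"
  unfolding linf_def by (rule Max_ge[OF finite_linf_values]) blast

lemma linf_leI:
  "(\<And>j k. j < N \<Longrightarrow> k < d \<Longrightarrow> real_of_int \<bar>x j k - y j k\<bar> \<le> r) \<Longrightarrow> 0 \<le> r \<Longrightarrow> linf N d x y \<le> r"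
  unfolding linf_def by (subst Max_le_iff[OF finite_linf_values]) auto

lemma linf_self: "linf N d x x = 0"
  by (intro antisym linf_leI linf_nonneg) auto

lemma linf_commute: "linf N d x y = linf N d y x"
proof (intro antisym linf_leI linf_nonneg)
  fix j k assume "j < N" "k < d"
  then show "real_of_int \<bar>x j k - y j k\<bar> \<le> linf N d y x" "real_of_int \<bar>y j k - x j k\<bar> \<le> linf N d x y"
    using coord_dist_le_linf[of j N k d x y] coord_dist_le_linf[of j N k d y x] by (simp_all add: abs_minus_commute)
qed

lemma linf_triangle: "linf N d x z \<le> linf N d x y + linf N d y z"
proof (intro linf_leI)
  fix j k assume "j < N" "k < d"
  then have "real_of_int \<bar>x j k - y j k\<bar> + real_of_int \<bar>y j k - z j k\<bar> \<le> linf N d x y + linf N d y z"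
    by (intro add_mono coord_dist_le_linf)
  then show "real_of_int \<bar>x j k - z j k\<bar> \<le> linf N d x y + linf N d y z" by simp
qed (simp add: add_nonneg_nonneg linf_nonneg)

lemma linf_le_l1: "linf N d x y \<le> l1 N d x y"
proof (intro linf_leI)
  fix j k assume "j < N" "k < d"
  then have "real_of_int \<bar>x j k - y j k\<bar> \<le> (\<Sum>k<d. real_of_int \<bar>x j k - y j k\<bar>)"
    by (intro member_le_sum) auto
  also have "\<dots> \<le> (\<Sum>j<N. \<Sum>k<d. real_of_int \<bar>x j k - y j k\<bar>)"
    using \<open>j < N\<close> by (intro member_le_sum[where f = "\<lambda>j. \<Sum>k<d. real_of_int \<bar>x j k - y j k\<bar>"])
      (auto intro: sum_nonneg)
  finally show "real_of_int \<bar>x j k - y j k\<bar> \<le> l1 N d x y" unfolding l1_def .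
qed (auto simp: l1_def intro!: sum_nonneg)

lemma linf_less_1_imp_eq:
  assumes "x \<in> conf N d" "y \<in> conf N d" "linf N d x y < 1"
  shows "x = y"
proof (intro ext)
  fix j k
  show "x j k = y j k"
  proof (cases "j < N \<and> k < d")
    case True
    then have "real_of_int \<bar>x j k - y j k\<bar> < 1"
      using coord_dist_le_linf[of j N k d x y] assms(3) by linarith
    then show ?thesis by linarith
  next
    case False
    then show ?thesis using assms(1,2) unfolding conf_def by auto
  qed
qed

lemma permc_permc: "permc \<sigma> (permc \<rho> y) = permc (\<rho> \<circ> \<sigma>) y"
  by (simp add: permc_def fun_eq_iff)

lemma permc_id: "permc id y = y"
  by (simp add: permc_def)

lemma permc_in_conf: "\<sigma> permutes {..<N} \<Longrightarrow> y \<in> conf N d \<Longrightarrow> permc \<sigma> y \<in> conf N d"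
  unfolding conf_def permc_def by (auto simp: permutes_def)

lemma linf_permc_permc:
  assumes \<sigma>: "\<sigma> permutes {..<N}"
  shows "linf N d (permc \<sigma> x) (permc \<sigma> y) = linf N d x y"
proof (intro antisym linf_leI linf_nonneg)
  fix j k assume "j < N" "k < d"
  moreover have "\<sigma> j < N" using \<open>j < N\<close> permutes_in_image[OF \<sigma>] by simp
  ultimately show "real_of_int \<bar>permc \<sigma> x j k - permc \<sigma> y j k\<bar> \<le> linf N d x y"
    using coord_dist_le_linf[of "\<sigma> j" N k d x y] unfolding permc_def by simp
next
  fix j k assume "j < N" "k < d"
  moreover have "inv \<sigma> j < N" "\<sigma> (inv \<sigma> j) = j"
    using \<open>j < N\<close> permutes_in_image[OF permutes_inv[OF \<sigma>]] permutes_inverses(1)[OF \<sigma>] by auto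
  ultimately show "real_of_int \<bar>x j k - y j k\<bar> \<le> linf N d (permc \<sigma> x) (permc \<sigma> y)"
    using coord_dist_le_linf[of "inv \<sigma> j" N k d "permc \<sigma> x" "permc \<sigma> y"] unfolding permc_def by simp
qed

lemma finite_dS_values: "finite {linf N d x (permc \<pi> y) | \<pi>. \<pi> permutes {..<N}}"
proof -
  have "{linf N d x (permc \<pi> y) | \<pi>. \<pi> permutes {..<N}} =
      (\<lambda>\<pi>. linf N d x (permc \<pi> y)) ` {\<pi>. \<pi> permutes {..<N}}"
    by auto
  then show ?thesis by (simp add: finite_permutations)
qed

lemma dS_le_linf_permc: "\<pi> permutes {..<N} \<Longrightarrow> dS N d x y \<le> linf N d x (permc \<pi> y)"
  unfolding dS_def by (rule Min_le[OF finite_dS_values]) blast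

lemma dS_attained: obtains \<pi> where "\<pi> permutes {..<N}" "dS N d x y = linf N d x (permc \<pi> y)"
proof -
  have "{linf N d x (permc \<pi> y) | \<pi>. \<pi> permutes {..<N}} \<noteq> {}"
    using permutes_id by blast
  from Min_in[OF finite_dS_values this] show thesis using that unfolding dS_def by blast
qed

lemma dS_nonneg: "0 \<le> dS N d x y"
proof -
  obtain \<pi> where "dS N d x y = linf N d x (permc \<pi> y)" by (rule dS_attained)
  then show ?thesis by (simp add: linf_nonneg)
qed

lemma dS_le_linf: "dS N d x y \<le> linf N d x y"
  using dS_le_linf_permc[OF permutes_id] by (simp add: permc_id)

lemma dS_triangle: "dS N d x z \<le> dS N d x y + dS N d y z"
proof -
  obtain \<pi> where \<pi>: "\<pi> permutes {..<N}" "dS N d x y = linf N d x (permc \<pi> y)"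
    by (rule dS_attained)
  obtain \<sigma> where \<sigma>: "\<sigma> permutes {..<N}" "dS N d y z = linf N d y (permc \<sigma> z)"
    by (rule dS_attained)
  have "dS N d x z \<le> linf N d x (permc (\<sigma> \<circ> \<pi>) z)"
    using \<pi> \<sigma> by (intro dS_le_linf_permc permutes_compose)
  also have "\<dots> \<le> linf N d x (permc \<pi> y) + linf N d (permc \<pi> y) (permc \<pi> (permc \<sigma> z))"
    by (simp add: permc_permc linf_triangle)
  also have "linf N d (permc \<pi> y) (permc \<pi> (permc \<sigma> z)) = dS N d y z"
    using \<sigma>(2) by (simp add: linf_permc_permc[OF \<pi>(1)])
  finally show ?thesis using \<pi>(2) by simp
qed

lemma dS_le_commute: "dS N d x y \<le> dS N d y x"
proof -
  obtain \<pi> where \<pi>: "\<pi> permutes {..<N}" "dS N d y x = linf N d y (permc \<pi> x)"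
    by (rule dS_attained)
  have "dS N d x y \<le> linf N d x (permc (inv \<pi>) y)"
    using \<pi>(1) by (intro dS_le_linf_permc permutes_inv)
  also have "\<dots> = linf N d (permc \<pi> x) (permc \<pi> (permc (inv \<pi>) y))"
    by (simp add: linf_permc_permc[OF \<pi>(1)])
  also have "permc \<pi> (permc (inv \<pi>) y) = y"
    by (simp add: permc_permc permutes_inv_o(2)[OF \<pi>(1)] permc_id)
  finally show ?thesis using \<pi>(2) by (simp add: linf_commute)
qed

lemma dS_commute: "dS N d x y = dS N d y x"
  by (intro antisym dS_le_commute)

section \<open>Counting configurations\<close>

lemma inj_on_conf_coords: "inj_on (\<lambda>x :: cfg. restrict (\<lambda>(j, k). x j k) ({..<N} \<times> {..<d})) (conf N d)"
proof (rule inj_onI, intro ext)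
  fix x y :: cfg and j k
  assume x: "x \<in> conf N d" and y: "y \<in> conf N d"
    and eq: "restrict (\<lambda>(j, k). x j k) ({..<N} \<times> {..<d}) = restrict (\<lambda>(j, k). y j k) ({..<N} \<times> {..<d})"
  show "x j k = y j k"
  proof (cases "j < N \<and> k < d")
    case True
    then show ?thesis using fun_cong[OF eq, of "(j, k)"] by simp
  next
    case False
    then show ?thesis using x y unfolding conf_def by auto
  qed
qed

lemma card_PiE_int_intervals:
  fixes f :: "'a \<Rightarrow> int"
  assumes "finite I" "0 \<le> R"
  shows "card (PiE I (\<lambda>p. {f p - R .. f p + R})) = nat (2 * R + 1) ^ card I"
  using assms by (simp add: card_PiE prod_constant)

lemma linf_ball_size:
  fixes c :: cfg and r :: real
  assumes "0 \<le> r"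
  shows "finite {x \<in> conf N d. linf N d x c \<le> r}"
    and "real (card {x \<in> conf N d. linf N d x c \<le> r}) \<le> (2 * r + 1) ^ (N * d)"
proof -
  define R where "R = \<lfloor>r\<rfloor>"
  define I where "I = {..<N} \<times> {..<d}"
  define F where "F = PiE I (\<lambda>p. {c (fst p) (snd p) - R .. c (fst p) (snd p) + R})"
  define coords where "coords = (\<lambda>x :: cfg. restrict (\<lambda>(j, k). x j k) I)"
  let ?A = "{x \<in> conf N d. linf N d x c \<le> r}"
  have inj: "inj_on coords ?A"
    using inj_on_conf_coords unfolding coords_def I_def by (rule inj_on_subset) blast
  have "coords ` ?A \<subseteq> F"
  proof clarify
    fix x assume x: "x \<in> conf N d" "linf N d x c \<le> r"
    have "x j k \<in> {c j k - R .. c j k + R}" if "j < N" "k < d" for j k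
    proof -
      have "real_of_int \<bar>x j k - c j k\<bar> \<le> r" using coord_dist_le_linf[OF that, of x c] x(2) by linarith
      then have "\<bar>x j k - c j k\<bar> \<le> R" unfolding R_def by linarith
      then show ?thesis by auto
    qed
    then show "coords x \<in> F" unfolding coords_def F_def I_def by auto
  qed
  moreover have "finite F" unfolding F_def I_def by (intro finite_PiE) auto
  ultimately have "finite (coords ` ?A)" by (rule finite_subset)
  then show "finite ?A" using inj by (rule finite_imageD)
  have "card ?A \<le> card F"
    using card_inj_on_le[OF inj \<open>coords ` ?A \<subseteq> F\<close> \<open>finite F\<close>] .
  also have "card F = nat (2 * R + 1) ^ (N * d)"
    unfolding F_def I_def using assms R_def by (subst card_PiE_int_intervals) (auto simp: card_cartesian_product)
  finally have "real (card ?A) \<le> real (nat (2 * R + 1) ^ (N * d))" by (simp only: of_nat_le_iff)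
  also have "\<dots> = (2 * real_of_int R + 1) ^ (N * d)"
    using assms unfolding R_def by simp
  also have "\<dots> \<le> (2 * r + 1) ^ (N * d)"
    using assms unfolding R_def by (intro power_mono) auto
  finally show "real (card ?A) \<le> (2 * r + 1) ^ (N * d)" .
qed

lemma box_size:
  fixes a :: cfg and l :: real
  assumes "0 \<le> l"
  shows "finite (box N d l a)" and "real (card (box N d l a)) \<le> fact N * (2 * l + 1) ^ (N * d)"
proof -
  define P where "P = {\<pi>. \<pi> permutes {..<N}}"
  define A where "A = (\<lambda>\<pi>. {x \<in> conf N d. linf N d x (permc \<pi> a) \<le> l})"
  have sub: "box N d l a \<subseteq> (\<Union>\<pi>\<in>P. A \<pi>)"
  proof
    fix x assume "x \<in> box N d l a"
    moreover obtain \<pi> where "\<pi> permutes {..<N}" "dS N d x a = linf N d x (permc \<pi> a)"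
      by (rule dS_attained)
    ultimately show "x \<in> (\<Union>\<pi>\<in>P. A \<pi>)" unfolding box_def A_def P_def by auto
  qed
  have finP: "finite P" unfolding P_def by (rule finite_permutations) simp
  have finU: "finite (\<Union>\<pi>\<in>P. A \<pi>)"
    unfolding A_def using finP linf_ball_size(1)[OF assms] by (intro finite_UN_I)
  then show "finite (box N d l a)" using sub by (rule finite_subset[rotated])
  have "card (box N d l a) \<le> card (\<Union>\<pi>\<in>P. A \<pi>)" using sub finU by (rule card_mono[rotated])
  also have "\<dots> \<le> (\<Sum>\<pi>\<in>P. card (A \<pi>))" by (rule card_UN_le[OF finP])
  finally have "real (card (box N d l a)) \<le> (\<Sum>\<pi>\<in>P. real (card (A \<pi>)))"
    by (simp flip: of_nat_sum)
  also have "\<dots> \<le> (\<Sum>\<pi>\<in>P. (2 * l + 1) ^ (N * d))"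
    using linf_ball_size(2)[OF assms] unfolding A_def by (intro sum_mono)
  also have "\<dots> = fact N * (2 * l + 1) ^ (N * d)"
    using card_permutations[of "{..<N}" N] unfolding P_def by simp
  finally show "real (card (box N d l a)) \<le> fact N * (2 * l + 1) ^ (N * d)" .
qed

abbreviation lattice_nbrs :: "nat \<Rightarrow> nat \<Rightarrow> cfg set \<Rightarrow> cfg \<Rightarrow> cfg set" where
  "lattice_nbrs N d \<Theta> u \<equiv> {v \<in> \<Theta>. l1 N d u v = 1}"

lemma lattice_nbrs_size:
  assumes "\<Theta> \<subseteq> conf N d"
  shows "finite (lattice_nbrs N d \<Theta> u)" and "real (card (lattice_nbrs N d \<Theta> u)) \<le> 3 ^ (N * d)"
proof -
  have sub: "lattice_nbrs N d \<Theta> u \<subseteq> {x \<in> conf N d. linf N d x u \<le> 1}"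
  proof
    fix v assume "v \<in> lattice_nbrs N d \<Theta> u"
    then show "v \<in> {x \<in> conf N d. linf N d x u \<le> 1}"
      using assms linf_le_l1[of N d u v] linf_commute[of N d v u] by auto
  qed
  then show "finite (lattice_nbrs N d \<Theta> u)"
    using linf_ball_size(1)[of 1] by (rule finite_subset) simp
  then have "card (lattice_nbrs N d \<Theta> u) \<le> card {x \<in> conf N d. linf N d x u \<le> 1}"
    using sub linf_ball_size(1)[of 1] by (intro card_mono) auto
  then show "real (card (lattice_nbrs N d \<Theta> u)) \<le> 3 ^ (N * d)"
    using linf_ball_size(2)[of 1 N d u] by simp
qed

lemma sum_const_lattice_nbrs_diff_le:
  fixes c :: real
  assumes "\<Theta> \<subseteq> conf N d" "0 \<le> c"
  shows "(\<Sum>v\<in>lattice_nbrs N d \<Theta> u - \<Lambda>. c) \<le> 3 ^ (N * d) * c"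
proof -
  have "card (lattice_nbrs N d \<Theta> u - \<Lambda>) \<le> card (lattice_nbrs N d \<Theta> u)"
    using lattice_nbrs_size(1)[OF assms(1)] by (intro card_mono) auto
  then have "real (card (lattice_nbrs N d \<Theta> u - \<Lambda>)) \<le> 3 ^ (N * d)"
    using lattice_nbrs_size(2)[OF assms(1), of u] by linarith
  then show ?thesis using assms(2) by (simp add: mult_right_mono)
qed

section \<open>Expansion in an orthonormal basis\<close>

definition ip_on :: "'a set \<Rightarrow> ('a \<Rightarrow> complex) \<Rightarrow> ('a \<Rightarrow> complex) \<Rightarrow> complex" where
  "ip_on \<Lambda> f g = (\<Sum>x\<in>\<Lambda>. f x * cnj (g x))"

definition orthonormal_basis_on :: "'a set \<Rightarrow> ('a \<Rightarrow> complex) set \<Rightarrow> bool" where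
  "orthonormal_basis_on \<Lambda> B \<longleftrightarrow> finite B \<and> card B = card \<Lambda> \<and>
     (\<forall>\<phi>\<in>B. \<forall>x. x \<notin> \<Lambda> \<longrightarrow> \<phi> x = 0) \<and> (\<forall>\<phi>\<in>B. ip_on \<Lambda> \<phi> \<phi> = 1) \<and>
     (\<forall>\<phi>\<in>B. \<forall>\<phi>'\<in>B. \<phi> \<noteq> \<phi>' \<longrightarrow> ip_on \<Lambda> \<phi> \<phi>' = 0)"

lemma ip_on_self: "ip_on \<Lambda> f f = of_real (\<Sum>x\<in>\<Lambda>. (cmod (f x))\<^sup>2)"
  unfolding ip_on_def by (simp add: complex_mult_cnj cmod_power2 del: of_real_power)

lemma ip_on_cnj_commute: "ip_on \<Lambda> g f = cnj (ip_on \<Lambda> f g)"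
  unfolding ip_on_def by (simp add: mult.commute)

lemma ip_on_sum_left: "ip_on \<Lambda> (\<lambda>x. \<Sum>\<phi>\<in>S. c \<phi> * \<phi> x) g = (\<Sum>\<phi>\<in>S. c \<phi> * ip_on \<Lambda> \<phi> g)"
  unfolding ip_on_def by (simp add: sum_distrib_left sum_distrib_right mult.assoc sum.swap[of _ \<Lambda>])

lemma sum_ip_on_orthogonal:
  assumes "finite S" "w \<in> S" "\<And>v. v \<in> S \<Longrightarrow> v \<noteq> w \<Longrightarrow> ip_on \<Lambda> v w = 0"
  shows "(\<Sum>v\<in>S. c v * ip_on \<Lambda> v w) = c w * ip_on \<Lambda> w w"
  using assms by (subst sum.remove[of S w]) (auto intro!: sum.neutral)

lemma ip_on_self_nonzero:
  assumes "finite \<Lambda>" "z \<in> \<Lambda>" "h z \<noteq> 0"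
  shows "ip_on \<Lambda> h h \<noteq> 0"
proof -
  have "0 < (cmod (h z))\<^sup>2" using assms(3) by simp
  also have "\<dots> \<le> (\<Sum>x\<in>\<Lambda>. (cmod (h x))\<^sup>2)" using assms(1,2) by (intro member_le_sum) auto
  finally have "(\<Sum>x\<in>\<Lambda>. (cmod (h x))\<^sup>2) \<noteq> 0" by simp
  then show ?thesis unfolding ip_on_self of_real_eq_0_iff .
qed

lemma sum_fun_apply: "(\<Sum>a\<in>A. f a) x = (\<Sum>a\<in>A. f a x)"
  by (induction A rule: infinite_finite_induct) auto

interpretation fun_cvs: vector_space "\<lambda>(c :: complex) (f :: 'a \<Rightarrow> complex) x. c * f x"
  by unfold_locales (auto simp: fun_eq_iff algebra_simps)

text \<open>A nonzero \<open>h\<close> orthogonal to all of \<open>B\<close> would give \<open>card \<Lambda> + 1\<close> independent vectors in the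
  span of the \<open>card \<Lambda>\<close> indicator functions of the points of \<open>\<Lambda>\<close>.\<close>
lemma orthonormal_basis_on_complete:
  assumes B: "orthonormal_basis_on \<Lambda> B" and fin: "finite \<Lambda>"
    and supp: "\<And>x. x \<notin> \<Lambda> \<Longrightarrow> h x = 0" and orth: "\<And>\<phi>. \<phi> \<in> B \<Longrightarrow> ip_on \<Lambda> h \<phi> = 0"
  shows "h x = 0"
proof (rule ccontr)
  assume "h x \<noteq> 0"
  with supp have "x \<in> \<Lambda>" by blast
  have hh: "ip_on \<Lambda> h h \<noteq> 0" using fin \<open>x \<in> \<Lambda>\<close> \<open>h x \<noteq> 0\<close> by (rule ip_on_self_nonzero)
  with orth have "h \<notin> B" by blast
  define S where "S = insert h B"
  have finS: "finite S" and cardS: "card S = card \<Lambda> + 1"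
    using B \<open>h \<notin> B\<close> unfolding S_def orthonormal_basis_on_def by auto
  have S_orth: "ip_on \<Lambda> v w = 0" if "v \<in> S" "w \<in> S" "v \<noteq> w" for v w
    using that B orth ip_on_cnj_commute[of \<Lambda> h] unfolding S_def orthonormal_basis_on_def
    by (metis complex_cnj_zero insert_iff ip_on_cnj_commute)
  have S_nonzero: "ip_on \<Lambda> v v \<noteq> 0" if "v \<in> S" for v
    using that B hh unfolding S_def orthonormal_basis_on_def by auto
  have "fun_cvs.independent S"
  proof (rule fun_cvs.independent_if_scalars_zero[OF finS])
    fix f w assume sum0: "(\<Sum>v\<in>S. (\<lambda>x. f v * v x)) = 0" and w: "w \<in> S"
    have "(\<lambda>x. \<Sum>v\<in>S. f v * v x) = 0"
      using sum0 by (simp add: fun_eq_iff sum_fun_apply)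
    then have "0 = ip_on \<Lambda> (\<lambda>x. \<Sum>v\<in>S. f v * v x) w" by (simp add: ip_on_def)
    also have "\<dots> = f w * ip_on \<Lambda> w w"
      unfolding ip_on_sum_left using finS w by (rule sum_ip_on_orthogonal) (use w S_orth in auto)
    finally show "f w = 0" using S_nonzero[OF w] by simp
  qed
  moreover have "S \<subseteq> fun_cvs.span ((\<lambda>z y. if y = z then 1 else 0) ` \<Lambda>)"
  proof
    fix g assume g: "g \<in> S"
    have "g y = 0" if "y \<notin> \<Lambda>" for y using g that B supp unfolding S_def orthonormal_basis_on_def by auto
    then have "g = (\<Sum>z\<in>\<Lambda>. (\<lambda>y. g z * (if y = z then 1 else 0)))"
      using fin by (auto simp: fun_eq_iff sum_fun_apply if_distrib sum.delta cong: if_cong)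
    also have "\<dots> \<in> fun_cvs.span ((\<lambda>z y. if y = z then 1 else 0) ` \<Lambda>)"
      by (intro fun_cvs.span_sum fun_cvs.span_scale fun_cvs.span_base) auto
    finally show "g \<in> fun_cvs.span ((\<lambda>z y. if y = z then 1 else 0) ` \<Lambda>)" .
  qed
  ultimately have "card S \<le> card ((\<lambda>z y. if y = z then (1::complex) else 0) ` \<Lambda>)"
    using fun_cvs.independent_span_bound[OF finite_imageI[OF fin]] by blast
  also have "\<dots> \<le> card \<Lambda>" using fin by (rule card_image_le)
  finally show False using cardS by simp
qed

lemma orthonormal_basis_on_expansion:
  assumes B: "orthonormal_basis_on \<Lambda> B" and fin: "finite \<Lambda>" and y: "y \<in> \<Lambda>"
  shows "h y = (\<Sum>\<phi>\<in>B. ip_on \<Lambda> h \<phi> * \<phi> y)"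
proof -
  define r where "r = (\<lambda>x. (if x \<in> \<Lambda> then h x else 0) - (\<Sum>\<phi>\<in>B. ip_on \<Lambda> h \<phi> * \<phi> x))"
  have "r y = 0"
  proof (rule orthonormal_basis_on_complete[OF B fin])
    show "r x = 0" if "x \<notin> \<Lambda>" for x
      using B that unfolding r_def orthonormal_basis_on_def by (auto intro!: sum.neutral)
    show "ip_on \<Lambda> r \<phi> = 0" if "\<phi> \<in> B" for \<phi>
    proof -
      have "ip_on \<Lambda> r \<phi> = ip_on \<Lambda> h \<phi> - ip_on \<Lambda> (\<lambda>x. \<Sum>\<psi>\<in>B. ip_on \<Lambda> h \<psi> * \<psi> x) \<phi>"
        unfolding r_def ip_on_def by (simp add: left_diff_distrib sum_subtractf)
      also have "ip_on \<Lambda> (\<lambda>x. \<Sum>\<psi>\<in>B. ip_on \<Lambda> h \<psi> * \<psi> x) \<phi> = ip_on \<Lambda> h \<phi> * ip_on \<Lambda> \<phi> \<phi>"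
        unfolding ip_on_sum_left using B \<open>\<phi> \<in> B\<close> unfolding orthonormal_basis_on_def
        by (intro sum_ip_on_orthogonal) auto
      finally show ?thesis using B \<open>\<phi> \<in> B\<close> unfolding orthonormal_basis_on_def by simp
    qed
  qed
  then show ?thesis using y unfolding r_def by simp
qed

section \<open>Eigenfunctions of the box\<close>

lemma localizing_box_basis:
  assumes "localizing_box N d \<tau> m lam \<V> \<U> l a"
  obtains B where "orthonormal_basis_on (box N d l a) B"
    and "\<And>\<phi>. \<phi> \<in> B \<Longrightarrow> \<exists>E. \<forall>x\<in>box N d l a. Hrestr N d lam \<V> \<U> (box N d l a) \<phi> x = E * \<phi> x"
    and "\<And>\<phi>. \<phi> \<in> B \<Longrightarrow> localizing_fun N d \<tau> l m (box N d l a) \<phi>"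
proof -
  let ?\<Lambda> = "box N d l a"
  obtain B where B: "finite B" "card B = card ?\<Lambda>"
    and props: "\<forall>\<phi>\<in>B. (\<forall>x. x \<notin> ?\<Lambda> \<longrightarrow> \<phi> x = 0) \<and>
                (\<exists>E. \<forall>x\<in>?\<Lambda>. Hrestr N d lam \<V> \<U> ?\<Lambda> \<phi> x = E * \<phi> x) \<and> localizing_fun N d \<tau> l m ?\<Lambda> \<phi>"
    and orth: "\<forall>\<phi>\<in>B. \<forall>\<phi>'\<in>B. \<phi> \<noteq> \<phi>' \<longrightarrow> ip_on ?\<Lambda> \<phi> \<phi>' = 0"
    using assms unfolding localizing_box_def Let_def ip_on_def by (elim exE conjE) simp
  have "ip_on ?\<Lambda> \<phi> \<phi> = 1" if "\<phi> \<in> B" for \<phi>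
  proof -
    from props that obtain x where "localizing_at N d \<tau> l m ?\<Lambda> x \<phi>"
      unfolding localizing_fun_def by auto
    then have "sqrt (\<Sum>x\<in>?\<Lambda>. (cmod (\<phi> x))\<^sup>2) = 1" unfolding localizing_at_def l2norm_def by simp
    then show ?thesis unfolding ip_on_self by simp
  qed
  with B props orth have "orthonormal_basis_on ?\<Lambda> B" unfolding orthonormal_basis_on_def by simp
  with props show thesis by (intro that) (auto dest: bspec)
qed

lemma localizing_at_pointwise:
  assumes loc: "localizing_at N d \<tau> l m \<Lambda> x \<phi>" and "finite \<Lambda>" "z \<in> \<Lambda>" "0 \<le> m"
  shows "cmod (\<phi> z) \<le> exp (m * l powr \<tau> - m * dS N d z x)"
proof (cases "l powr \<tau> \<le> dS N d z x")
  case True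
  then have "cmod (\<phi> z) \<le> exp (- m * dS N d z x)"
    using loc \<open>z \<in> \<Lambda>\<close> unfolding localizing_at_def by blast
  also have "\<dots> \<le> exp (m * l powr \<tau> - m * dS N d z x)" using \<open>0 \<le> m\<close> by simp
  finally show ?thesis .
next
  case False
  have "(cmod (\<phi> z))\<^sup>2 \<le> (\<Sum>y\<in>\<Lambda>. (cmod (\<phi> y))\<^sup>2)" using assms(2,3) by (intro member_le_sum) auto
  also have "\<dots> = 1" using loc unfolding localizing_at_def l2norm_def by simp
  finally have "cmod (\<phi> z) \<le> 1" by (simp add: abs_square_le_1)
  moreover have "m * dS N d z x \<le> m * l powr \<tau>" using False \<open>0 \<le> m\<close> by (intro mult_left_mono) auto
  ultimately show ?thesis by (smt (verit) one_le_exp_iff)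
qed

lemma localizing_at_product_decay:
  assumes "localizing_at N d \<tau> l m \<Lambda> x \<phi>" "finite \<Lambda>" "u \<in> \<Lambda>" "y \<in> \<Lambda>" "0 \<le> m"
  shows "cmod (\<phi> u) * cmod (\<phi> y) \<le> exp (2 * m * l powr \<tau> - m * dS N d y u)"
proof -
  have "cmod (\<phi> u) * cmod (\<phi> y) \<le>
      exp (m * l powr \<tau> - m * dS N d u x) * exp (m * l powr \<tau> - m * dS N d y x)"
    using assms by (intro mult_mono localizing_at_pointwise) auto
  also have "\<dots> = exp (2 * m * l powr \<tau> - m * (dS N d y x + dS N d x u))"
    using dS_commute[of N d u x] by (simp add: algebra_simps flip: exp_add)
  also have "\<dots> \<le> exp (2 * m * l powr \<tau> - m * dS N d y u)"
    using dS_triangle[of N d y u x] \<open>0 \<le> m\<close> by (simp add: mult_left_mono)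
  finally show ?thesis .
qed

text \<open>Pairing the eigenvalue equations of \<open>\<psi>\<close> on \<open>\<Theta>\<close> and of \<open>\<phi>\<close> on \<open>\<Lambda>\<close>: the hopping terms inside
  \<open>\<Lambda>\<close> cancel by symmetry of the adjacency, and only the hops from \<open>\<Lambda>\<close> to \<open>\<Theta> - \<Lambda>\<close> survive.\<close>
lemma green_identity:
  fixes \<psi> :: "cfg \<Rightarrow> real" and \<phi> :: "cfg \<Rightarrow> complex"
  assumes fin: "finite \<Lambda>" and sub: "\<Lambda> \<subseteq> \<Theta>"
    and fin_nbrs: "\<And>x. x \<in> \<Lambda> \<Longrightarrow> finite (lattice_nbrs N d \<Theta> x)"
    and \<psi>: "gen_eigenfunction N d lam \<V> \<U> \<Theta> \<psi> \<mu>"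
    and \<phi>: "\<And>x. x \<in> \<Lambda> \<Longrightarrow> Hrestr N d lam \<V> \<U> \<Lambda> \<phi> x = E * \<phi> x"
  shows "(cnj E - of_real \<mu>) * ip_on \<Lambda> (\<lambda>x. of_real (\<psi> x)) \<phi> =
    (\<Sum>u\<in>\<Lambda>. of_real (\<Sum>v\<in>lattice_nbrs N d \<Theta> u - \<Lambda>. \<psi> v) * cnj (\<phi> u))"
proof -
  define W where "W = (\<lambda>x. lam * Vpot N \<V> x + Upot N \<U> x)"
  define g where "g = (\<lambda>u. \<Sum>v\<in>lattice_nbrs N d \<Theta> u - \<Lambda>. \<psi> v)"
  define A where "A = (\<lambda>x y. l1 N d x y = 1)"
  have A_commute: "A x y = A y x" for x y
    unfolding A_def l1_def by (simp add: abs_minus_commute)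
  have \<psi>_eq: "g x = (W x - \<mu>) * \<psi> x - (\<Sum>y\<in>\<Lambda>. if A x y then \<psi> y else 0)" if x: "x \<in> \<Lambda>" for x
  proof -
    have "- (\<Sum>y\<in>lattice_nbrs N d \<Theta> x. \<psi> y) + W x * \<psi> x = \<mu> * \<psi> x"
      using \<psi> x sub unfolding gen_eigenfunction_def Hrestr_def W_def by auto
    moreover have "(\<Sum>y\<in>lattice_nbrs N d \<Theta> x. \<psi> y) = (\<Sum>y\<in>lattice_nbrs N d \<Theta> x \<inter> \<Lambda>. \<psi> y) + g x"
      unfolding g_def using fin_nbrs[OF x] by (simp add: sum.Int_Diff)
    moreover have "lattice_nbrs N d \<Theta> x \<inter> \<Lambda> = {y \<in> \<Lambda>. A x y}" using sub unfolding A_def by auto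
    ultimately show ?thesis using fin by (simp add: sum.inter_filter algebra_simps)
  qed
  have \<phi>_eq: "(\<Sum>x\<in>\<Lambda>. if A y x then \<phi> x else 0) = (of_real (W y) - E) * \<phi> y" if y: "y \<in> \<Lambda>" for y
  proof -
    have "- (\<Sum>x\<in>{x \<in> \<Lambda>. A y x}. \<phi> x) + of_real (W y) * \<phi> y = E * \<phi> y"
      using \<phi>[OF y] unfolding Hrestr_def W_def A_def by simp
    then show ?thesis using fin by (simp add: sum.inter_filter algebra_simps)
  qed
  have "(\<Sum>u\<in>\<Lambda>. of_real (g u) * cnj (\<phi> u)) =
     (\<Sum>u\<in>\<Lambda>. of_real ((W u - \<mu>) * \<psi> u) * cnj (\<phi> u)) -
     (\<Sum>u\<in>\<Lambda>. \<Sum>y\<in>\<Lambda>. if A u y then of_real (\<psi> y) * cnj (\<phi> u) else 0)"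
  proof -
    have "complex_of_real (\<Sum>y\<in>\<Lambda>. if A u y then \<psi> y else 0) * c =
        (\<Sum>y\<in>\<Lambda>. if A u y then of_real (\<psi> y) * c else 0)" for u c
      by (simp add: sum_distrib_right) (intro sum.cong, auto)
    then show ?thesis
      by (simp only: \<psi>_eq of_real_diff left_diff_distrib sum_subtractf cong: sum.cong)
  qed
  also have "(\<Sum>u\<in>\<Lambda>. \<Sum>y\<in>\<Lambda>. if A u y then of_real (\<psi> y) * cnj (\<phi> u) else 0) =
      (\<Sum>y\<in>\<Lambda>. of_real (\<psi> y) * cnj (\<Sum>u\<in>\<Lambda>. if A y u then \<phi> u else 0))"
    by (subst sum.swap) (simp add: sum_distrib_left A_commute if_distrib cong: if_cong)
  also have "\<dots> = (\<Sum>y\<in>\<Lambda>. of_real (\<psi> y) * cnj ((of_real (W y) - E) * \<phi> y))"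
    by (intro sum.cong refl) (simp add: \<phi>_eq)
  finally have "(\<Sum>u\<in>\<Lambda>. of_real (g u) * cnj (\<phi> u)) =
      (\<Sum>u\<in>\<Lambda>. (cnj E - of_real \<mu>) * (of_real (\<psi> u) * cnj (\<phi> u)))"
    by (simp add: sum_subtractf[symmetric] algebra_simps)
  then show ?thesis unfolding g_def ip_on_def by (simp add: sum_distrib_left)
qed

lemma gap_coefficient_bound:
  fixes \<psi> :: "cfg \<Rightarrow> real" and \<phi> :: "cfg \<Rightarrow> complex"
  assumes "finite \<Lambda>" "\<Lambda> \<subseteq> \<Theta>" "\<Theta> \<subseteq> conf N d"
    and "gen_eigenfunction N d lam \<V> \<U> \<Theta> \<psi> \<mu>"
    and "\<And>x. x \<in> \<Lambda> \<Longrightarrow> Hrestr N d lam \<V> \<U> \<Lambda> \<phi> x = E * \<phi> x"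
    and gap: "\<delta> \<le> cmod (of_real \<mu> - E)"
  shows "\<delta> * cmod (ip_on \<Lambda> (\<lambda>x. of_real (\<psi> x)) \<phi>) \<le>
    (\<Sum>u\<in>\<Lambda>. (\<Sum>v\<in>lattice_nbrs N d \<Theta> u - \<Lambda>. \<bar>\<psi> v\<bar>) * cmod (\<phi> u))"
proof -
  have "cmod (cnj E - of_real \<mu>) = cmod (of_real \<mu> - E)"
    by (metis complex_cnj_complex_of_real complex_cnj_diff complex_mod_cnj norm_minus_commute)
  then have "\<delta> * cmod (ip_on \<Lambda> (\<lambda>x. of_real (\<psi> x)) \<phi>) \<le>
      cmod ((cnj E - of_real \<mu>) * ip_on \<Lambda> (\<lambda>x. of_real (\<psi> x)) \<phi>)"
    using gap by (simp add: norm_mult mult_right_mono)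
  also have "\<dots> = cmod (\<Sum>u\<in>\<Lambda>. of_real (\<Sum>v\<in>lattice_nbrs N d \<Theta> u - \<Lambda>. \<psi> v) * cnj (\<phi> u))"
    using assms lattice_nbrs_size(1) by (subst green_identity) auto
  also have "\<dots> \<le> (\<Sum>u\<in>\<Lambda>. \<bar>\<Sum>v\<in>lattice_nbrs N d \<Theta> u - \<Lambda>. \<psi> v\<bar> * cmod (\<phi> u))"
    by (rule order_trans[OF norm_sum]) (simp add: norm_mult del: of_real_sum)
  also have "\<dots> \<le> (\<Sum>u\<in>\<Lambda>. (\<Sum>v\<in>lattice_nbrs N d \<Theta> u - \<Lambda>. \<bar>\<psi> v\<bar>) * cmod (\<phi> u))"
    by (intro sum_mono mult_right_mono sum_abs) auto
  finally show ?thesis .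
qed

lemma eigenvalue_in_spec_restr:
  assumes "ip_on \<Lambda> \<phi> \<phi> = 1" and "\<And>x. x \<in> \<Lambda> \<Longrightarrow> Hrestr N d lam \<V> \<U> \<Lambda> \<phi> x = E * \<phi> x"
  shows "E \<in> spec_restr N d lam \<V> \<U> \<Lambda>"
proof -
  have "\<exists>x\<in>\<Lambda>. \<phi> x \<noteq> 0"
  proof (rule ccontr)
    assume "\<not> (\<exists>x\<in>\<Lambda>. \<phi> x \<noteq> 0)"
    then have "ip_on \<Lambda> \<phi> \<phi> = 0" unfolding ip_on_def by simp
    with assms(1) show False by simp
  qed
  with assms(2) show ?thesis unfolding spec_restr_def by blast
qed

section \<open>Decay across the boundary of the box\<close>

lemma box_exterior_nbr_dS:
  assumes \<Theta>: "\<Theta> \<subseteq> conf N d" and u: "u \<in> box N d l a" and v: "v \<in> \<Theta>" "v \<notin> box N d l a"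
    and uv: "l1 N d u v = 1"
  shows "dS N d u v = 1"
proof -
  have "dS N d u v \<le> 1" using dS_le_linf[of N d u v] linf_le_l1[of N d u v] uv by simp
  moreover have "\<not> dS N d u v < 1"
  proof
    assume "dS N d u v < 1"
    moreover obtain \<pi> where \<pi>: "\<pi> permutes {..<N}" "dS N d u v = linf N d u (permc \<pi> v)"
      by (rule dS_attained)
    moreover have "u \<in> conf N d" "v \<in> conf N d" using u v \<Theta> unfolding box_def by auto
    ultimately have "u = permc \<pi> v" using linf_less_1_imp_eq permc_in_conf by metis
    then have "dS N d v u = 0" using \<pi>(2) dS_nonneg[of N d u v] by (simp add: linf_self dS_commute)
    then have "dS N d v a \<le> l" using dS_triangle[of N d v a u] u unfolding box_def by simp
    then show False using v \<open>v \<in> conf N d\<close> unfolding box_def by simp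
  qed
  ultimately show ?thesis by simp
qed

lemma finite_bdry_ex_box:
  assumes \<Theta>: "\<Theta> \<subseteq> conf N d" and "0 \<le> l"
  shows "finite (bdry_ex N d \<Theta> (box N d l a))"
proof -
  have "bdry_ex N d \<Theta> (box N d l a) \<subseteq> box N d (l + 1) a"
  proof
    fix v assume v: "v \<in> bdry_ex N d \<Theta> (box N d l a)"
    then obtain u where u: "u \<in> box N d l a" "dS N d u v = 1" unfolding bdry_ex_def by auto
    have "dS N d v a \<le> dS N d v u + dS N d u a" by (rule dS_triangle)
    then have "dS N d v a \<le> l + 1" using u dS_commute[of N d v u] unfolding box_def by simp
    then show "v \<in> box N d (l + 1) a" using v \<Theta> unfolding bdry_ex_def box_def by auto
  qed
  moreover have "finite (box N d (l + 1) a)" using \<open>0 \<le> l\<close> by (intro box_size(1)) simp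
  ultimately show ?thesis by (rule finite_subset)
qed

definition weighted_bdry_max :: "nat \<Rightarrow> nat \<Rightarrow> cfg set \<Rightarrow> cfg set \<Rightarrow> (cfg \<Rightarrow> real) \<Rightarrow> real \<Rightarrow> cfg \<Rightarrow> real" where
  "weighted_bdry_max N d \<Theta> \<Lambda> \<psi> \<kappa> y =
     Max (insert 0 ((\<lambda>v. exp (- \<kappa> * dS N d y v) * \<bar>\<psi> v\<bar>) ` bdry_ex N d \<Theta> \<Lambda>))"

lemma weighted_bdry_max_nonneg:
  "finite (bdry_ex N d \<Theta> \<Lambda>) \<Longrightarrow> 0 \<le> weighted_bdry_max N d \<Theta> \<Lambda> \<psi> \<kappa> y"
  unfolding weighted_bdry_max_def by (intro Max_ge) auto

lemma abs_le_weighted_bdry_max: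
  assumes "finite (bdry_ex N d \<Theta> \<Lambda>)" "v \<in> bdry_ex N d \<Theta> \<Lambda>"
  shows "\<bar>\<psi> v\<bar> \<le> weighted_bdry_max N d \<Theta> \<Lambda> \<psi> \<kappa> y * exp (\<kappa> * dS N d y v)"
proof -
  have "\<bar>\<psi> v\<bar> = exp (\<kappa> * dS N d y v) * (exp (- \<kappa> * dS N d y v) * \<bar>\<psi> v\<bar>)"
    by (simp add: exp_minus field_simps)
  also have "\<dots> \<le> exp (\<kappa> * dS N d y v) * weighted_bdry_max N d \<Theta> \<Lambda> \<psi> \<kappa> y"
    unfolding weighted_bdry_max_def using assms by (intro mult_left_mono Max_ge) auto
  finally show ?thesis by (simp add: mult.commute)
qed

text \<open>Lowering the decay rate of \<open>\<psi>\<close> by \<open>3 m \<epsilon>\<close> gains \<open>exp (- 3 m \<epsilon> R) = exp (- 3 m P)\<close> over the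
  distance \<open>R\<close> from \<open>y\<close> to the outside, which beats the factor \<open>exp (2 m P)\<close> lost in the
  localization of \<open>\<phi>\<close> near its centre.\<close>
lemma boundary_term_decay:
  assumes \<Theta>: "\<Theta> \<subseteq> conf N d" and "0 \<le> l" and "0 \<le> m" and "0 \<le> \<epsilon>" and \<epsilon>R: "\<epsilon> * R = P"
    and u: "u \<in> box N d l a" and v: "v \<in> lattice_nbrs N d \<Theta> u - box N d l a"
    and y: "y \<in> inner_part N d \<Theta> (box N d l a) R"
    and \<phi>: "pu * py \<le> exp (2 * m * P - m * dS N d y u)" "0 \<le> pu" "0 \<le> py"
  shows "\<bar>\<psi> v\<bar> * (pu * py) \<le> weighted_bdry_max N d \<Theta> (box N d l a) \<psi> (m * (1 - 3 * \<epsilon>)) y * exp (m - m * P)"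
proof -
  define M where "M = weighted_bdry_max N d \<Theta> (box N d l a) \<psi> (m * (1 - 3 * \<epsilon>)) y"
  have fin: "finite (bdry_ex N d \<Theta> (box N d l a))" using \<Theta> \<open>0 \<le> l\<close> by (rule finite_bdry_ex_box)
  have uv: "dS N d u v = 1" using v by (intro box_exterior_nbr_dS[OF \<Theta> u]) auto
  then have "v \<in> bdry_ex N d \<Theta> (box N d l a)" using u v unfolding bdry_ex_def by auto
  then have \<psi>v: "\<bar>\<psi> v\<bar> \<le> M * exp (m * (1 - 3 * \<epsilon>) * dS N d y v)"
    unfolding M_def using fin by (intro abs_le_weighted_bdry_max)
  have far: "R \<le> dS N d y v" using y v unfolding inner_part_def by auto
  have near: "dS N d y v \<le> dS N d y u + 1" using dS_triangle[of N d y v u] uv dS_commute[of N d v u] by simp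
  have "\<bar>\<psi> v\<bar> * (pu * py) \<le> M * exp (m * (1 - 3 * \<epsilon>) * dS N d y v) * exp (2 * m * P - m * dS N d y u)"
    using \<psi>v \<phi> by (intro mult_mono) auto
  also have "\<dots> = M * exp (m * (1 - 3 * \<epsilon>) * dS N d y v + 2 * m * P - m * dS N d y u)"
    by (simp add: exp_add[symmetric] exp_diff)
  also have "\<dots> \<le> M * exp (m - m * P)"
  proof (intro mult_left_mono exp_le_cancel_iff[THEN iffD2])
    have "m * dS N d y v \<le> m * dS N d y u + m"
      using mult_left_mono[OF near \<open>0 \<le> m\<close>] by (simp add: distrib_left)
    moreover have "3 * m * \<epsilon> * R \<le> 3 * m * \<epsilon> * dS N d y v" using far \<open>0 \<le> m\<close> \<open>0 \<le> \<epsilon>\<close> by (intro mult_left_mono) auto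
    moreover have "3 * m * \<epsilon> * R = 3 * m * P" using \<epsilon>R by (simp add: mult.assoc)
    moreover have "m * (1 - 3 * \<epsilon>) * dS N d y v = m * dS N d y v - 3 * m * \<epsilon> * dS N d y v"
      by (simp add: algebra_simps)
    ultimately show "m * (1 - 3 * \<epsilon>) * dS N d y v + 2 * m * P - m * dS N d y u \<le> m - m * P"
      by linarith
    show "0 \<le> M" unfolding M_def using fin by (rule weighted_bdry_max_nonneg)
  qed
  finally show ?thesis unfolding M_def .
qed

lemma eigenvector_coefficient_bound:
  fixes N d :: nat and l :: real and a :: cfg and \<psi> :: "cfg \<Rightarrow> real" and \<phi> :: "cfg \<Rightarrow> complex"
  defines "\<Lambda> \<equiv> box N d l a"
  assumes \<Theta>: "\<Theta> \<subseteq> conf N d" "\<Lambda> \<subseteq> \<Theta>" and "0 \<le> l" "0 \<le> m" "0 \<le> \<epsilon>" and \<epsilon>R: "\<epsilon> * R = l powr \<tau>"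
    and \<psi>: "gen_eigenfunction N d lam \<V> \<U> \<Theta> \<psi> \<mu>"
    and gap: "\<forall>E \<in> spec_restr N d lam \<V> \<U> \<Lambda>. \<delta> \<le> cmod (of_real \<mu> - E)"
    and \<phi>: "\<exists>E. \<forall>x\<in>\<Lambda>. Hrestr N d lam \<V> \<U> \<Lambda> \<phi> x = E * \<phi> x" "ip_on \<Lambda> \<phi> \<phi> = 1"
      "localizing_fun N d \<tau> l m \<Lambda> \<phi>"
    and y: "y \<in> inner_part N d \<Theta> \<Lambda> R"
  shows "\<delta> * (cmod (ip_on \<Lambda> (\<lambda>x. of_real (\<psi> x)) \<phi>) * cmod (\<phi> y)) \<le>
    card \<Lambda> * 3 ^ (N * d) * (weighted_bdry_max N d \<Theta> \<Lambda> \<psi> (m * (1 - 3 * \<epsilon>)) y * exp (m - m * l powr \<tau>))"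
proof -
  obtain E where E: "\<And>x. x \<in> \<Lambda> \<Longrightarrow> Hrestr N d lam \<V> \<U> \<Lambda> \<phi> x = E * \<phi> x"
    using \<phi>(1) by blast
  obtain x where loc: "localizing_at N d \<tau> l m \<Lambda> x \<phi>"
    using \<phi>(3) unfolding localizing_fun_def by blast
  have gapE: "\<delta> \<le> cmod (of_real \<mu> - E)" using gap eigenvalue_in_spec_restr[OF \<phi>(2) E] by blast
  define MQ where "MQ = weighted_bdry_max N d \<Theta> \<Lambda> \<psi> (m * (1 - 3 * \<epsilon>)) y * exp (m - m * l powr \<tau>)"
  have fin: "finite \<Lambda>" unfolding \<Lambda>_def using \<open>0 \<le> l\<close> by (rule box_size(1))
  have "y \<in> \<Lambda>" using y unfolding inner_part_def by simp
  have MQ0: "0 \<le> MQ"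
    unfolding MQ_def \<Lambda>_def using finite_bdry_ex_box[OF \<Theta>(1) \<open>0 \<le> l\<close>] by (simp add: weighted_bdry_max_nonneg)
  have pair_term: "\<bar>\<psi> v\<bar> * (cmod (\<phi> u) * cmod (\<phi> y)) \<le> MQ" if "u \<in> \<Lambda>" "v \<in> lattice_nbrs N d \<Theta> u - \<Lambda>" for u v
  proof -
    have "cmod (\<phi> u) * cmod (\<phi> y) \<le> exp (2 * m * l powr \<tau> - m * dS N d y u)"
      using loc fin that(1) \<open>y \<in> \<Lambda>\<close> \<open>0 \<le> m\<close> by (rule localizing_at_product_decay)
    then show ?thesis
      unfolding MQ_def using \<Theta>(1) \<open>0 \<le> l\<close> \<open>0 \<le> m\<close> \<open>0 \<le> \<epsilon>\<close> \<epsilon>R that y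
      unfolding \<Lambda>_def by (intro boundary_term_decay) auto
  qed
  have "\<delta> * (cmod (ip_on \<Lambda> (\<lambda>x. of_real (\<psi> x)) \<phi>) * cmod (\<phi> y)) \<le>
      (\<Sum>u\<in>\<Lambda>. (\<Sum>v\<in>lattice_nbrs N d \<Theta> u - \<Lambda>. \<bar>\<psi> v\<bar>) * cmod (\<phi> u)) * cmod (\<phi> y)"
    unfolding mult.assoc[symmetric] using fin \<Theta> \<psi> E gapE
    by (intro mult_right_mono gap_coefficient_bound) auto
  also have "\<dots> = (\<Sum>u\<in>\<Lambda>. \<Sum>v\<in>lattice_nbrs N d \<Theta> u - \<Lambda>. \<bar>\<psi> v\<bar> * (cmod (\<phi> u) * cmod (\<phi> y)))"
    by (simp add: sum_distrib_right mult.assoc)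
  also have "\<dots> \<le> (\<Sum>u\<in>\<Lambda>. \<Sum>v\<in>lattice_nbrs N d \<Theta> u - \<Lambda>. MQ)"
    by (intro sum_mono pair_term)
  also have "\<dots> \<le> (\<Sum>u\<in>\<Lambda>. 3 ^ (N * d) * MQ)"
    using \<Theta>(1) MQ0 by (intro sum_mono sum_const_lattice_nbrs_diff_le)
  finally show ?thesis unfolding MQ_def by simp
qed

lemma interior_estimate:
  fixes \<psi> :: "cfg \<Rightarrow> real"
  assumes \<Theta>: "\<Theta> \<subseteq> conf N d" "box N d l a \<subseteq> \<Theta>" and "0 \<le> l" "0 \<le> m" "0 \<le> \<epsilon>" "0 < \<delta>"
    and \<epsilon>R: "\<epsilon> * R = l powr \<tau>"
    and loc: "localizing_box N d \<tau> m lam \<V> \<U> l a"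
    and \<psi>: "gen_eigenfunction N d lam \<V> \<U> \<Theta> \<psi> \<mu>"
    and gap: "\<forall>E \<in> spec_restr N d lam \<V> \<U> (box N d l a). \<delta> \<le> cmod (of_real \<mu> - E)"
    and small: "(fact N * (2 * l + 1) ^ (N * d))\<^sup>2 * 3 ^ (N * d) * exp (m - m * l powr \<tau>) \<le> \<delta>"
    and y: "y \<in> inner_part N d \<Theta> (box N d l a) R"
  shows "\<bar>\<psi> y\<bar> \<le> weighted_bdry_max N d \<Theta> (box N d l a) \<psi> (m * (1 - 3 * \<epsilon>)) y"
proof -
  define \<Lambda> where "\<Lambda> = box N d l a"
  define M where "M = weighted_bdry_max N d \<Theta> \<Lambda> \<psi> (m * (1 - 3 * \<epsilon>)) y"
  define Q where "Q = exp (m - m * l powr \<tau>)"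
  obtain B where B: "orthonormal_basis_on \<Lambda> B"
    and eig: "\<And>\<phi>. \<phi> \<in> B \<Longrightarrow> \<exists>E. \<forall>x\<in>\<Lambda>. Hrestr N d lam \<V> \<U> \<Lambda> \<phi> x = E * \<phi> x"
    and locf: "\<And>\<phi>. \<phi> \<in> B \<Longrightarrow> localizing_fun N d \<tau> l m \<Lambda> \<phi>"
    using loc unfolding \<Lambda>_def by (rule localizing_box_basis) blast
  have fin: "finite \<Lambda>" and card: "real (card \<Lambda>) \<le> fact N * (2 * l + 1) ^ (N * d)"
    unfolding \<Lambda>_def using \<open>0 \<le> l\<close> by (rule box_size)+
  have "y \<in> \<Lambda>" using y unfolding \<Lambda>_def inner_part_def by simp
  have "\<delta> * \<bar>\<psi> y\<bar> = \<delta> * cmod (\<Sum>\<phi>\<in>B. ip_on \<Lambda> (\<lambda>x. of_real (\<psi> x)) \<phi> * \<phi> y)"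
    using orthonormal_basis_on_expansion[OF B fin \<open>y \<in> \<Lambda>\<close>, of "\<lambda>x. of_real (\<psi> x)"]
    by (metis norm_of_real)
  also have "\<dots> \<le> (\<Sum>\<phi>\<in>B. \<delta> * (cmod (ip_on \<Lambda> (\<lambda>x. of_real (\<psi> x)) \<phi>) * cmod (\<phi> y)))"
    unfolding sum_distrib_left[symmetric] using \<open>0 < \<delta>\<close>
    by (intro mult_left_mono order_trans[OF norm_sum]) (auto simp: norm_mult)
  also have "\<dots> \<le> (\<Sum>\<phi>\<in>B. card \<Lambda> * 3 ^ (N * d) * (M * Q))"
    using B eig locf assms unfolding M_def Q_def \<Lambda>_def orthonormal_basis_on_def
    by (intro sum_mono eigenvector_coefficient_bound) auto
  also have "\<dots> = (real (card \<Lambda>))\<^sup>2 * 3 ^ (N * d) * Q * M"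
    using B unfolding orthonormal_basis_on_def by (simp add: power2_eq_square)
  also have "\<dots> \<le> \<delta> * M"
  proof (rule mult_right_mono)
    show "(real (card \<Lambda>))\<^sup>2 * 3 ^ (N * d) * Q \<le> \<delta>"
      using small card unfolding Q_def
      by (smt (verit) mult_right_mono power_mono of_nat_0_le_iff exp_gt_zero zero_le_power)
    show "0 \<le> M"
      unfolding M_def \<Lambda>_def using finite_bdry_ex_box[OF \<Theta>(1) \<open>0 \<le> l\<close>] by (rule weighted_bdry_max_nonneg)
  qed
  finally show ?thesis unfolding M_def \<Lambda>_def using \<open>0 < \<delta>\<close> by simp
qed

section \<open>Choice of the length scale\<close>

lemma large_scale_bounds:
  fixes \<tau> g m c :: real
  assumes "0 < g" "g < \<tau>" "0 < m" "0 < c"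
  obtains L where "\<And>l. L \<le> l \<Longrightarrow>
    ln 2 + m \<le> m / 4 * l powr \<tau> \<and> l powr g \<le> m / 4 * l powr \<tau> \<and> ln (3 * l) \<le> c * l powr (\<tau> / 2)"
proof -
  have "0 < \<tau>" using assms by simp
  have "eventually (\<lambda>l. ln 2 + m \<le> m / 4 * l powr \<tau>) at_top"
    using \<open>0 < \<tau>\<close> \<open>0 < m\<close> by real_asymp
  moreover have "eventually (\<lambda>l. l powr g \<le> m / 4 * l powr \<tau>) at_top"
    using assms by real_asymp
  moreover have "eventually (\<lambda>l. ln (3 * l) \<le> c * l powr (\<tau> / 2)) at_top"
    using \<open>0 < \<tau>\<close> \<open>0 < c\<close> by real_asymp
  ultimately have "eventually (\<lambda>l. ln 2 + m \<le> m / 4 * l powr \<tau> \<and> l powr g \<le> m / 4 * l powr \<tau> \<and>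
      ln (3 * l) \<le> c * l powr (\<tau> / 2)) at_top"
    by eventually_elim blast
  then show thesis using that unfolding eventually_at_top_linorder by blast
qed

lemma counting_factor_le_exp:
  fixes l :: real
  assumes "1 \<le> N" "1 \<le> l"
  shows "(fact N * (2 * l + 1) ^ (N * d))\<^sup>2 * 3 ^ (N * d) \<le>
    exp (2 * (real N * ln (real N)) + 3 * (real (N * d) * ln (3 * l)))"
proof -
  define a where "a = real N * ln (real N)"
  define b where "b = real (N * d) * ln (3 * l)"
  have "fact N \<le> exp a"
  proof -
    have "(fact N :: real) \<le> of_nat (N ^ N)" by (rule fact_le_power)
    also have "\<dots> = exp a" unfolding a_def using assms by (simp add: exp_of_nat_mult)
    finally show ?thesis .
  qed
  moreover have "(2 * l + 1) ^ (N * d) \<le> exp b" "3 ^ (N * d) \<le> exp b"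
  proof -
    have "exp b = exp (ln (3 * l)) ^ (N * d)" unfolding b_def by (rule exp_of_nat_mult)
    also have "\<dots> = (3 * l) ^ (N * d)" using assms by simp
    finally have eb: "exp b = (3 * l) ^ (N * d)" .
    show "(2 * l + 1) ^ (N * d) \<le> exp b" unfolding eb using assms by (intro power_mono) auto
    show "3 ^ (N * d) \<le> exp b" unfolding eb using assms by (intro power_mono) auto
  qed
  ultimately have "(fact N * (2 * l + 1) ^ (N * d))\<^sup>2 * 3 ^ (N * d) \<le> (exp a * exp b)\<^sup>2 * exp b"
    using assms by (intro mult_mono power_mono) auto
  also have "\<dots> = exp (2 * a + 3 * b)"
  proof -
    have "2 * a + 3 * b = a + a + b + b + b" by simp
    then show ?thesis by (simp only: exp_add power2_eq_square mult_ac)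
  qed
  finally show ?thesis unfolding a_def b_def .
qed

lemma particle_log_bound:
  fixes l c K \<tau> :: real and N d :: nat
  assumes "0 < \<tau>" "0 < c" "1 \<le> N" "1 \<le> l" "1 \<le> d"
    and log: "ln (3 * l) \<le> c / (3 * d) * l powr (\<tau> / 2)"
    and K: "3 * d * (1 + 2 / \<tau>) \<le> c * K"
    and KP: "K * (real N * ln (2 + real N)) \<le> l powr \<tau>"
  shows "3 * d * (real N * ln (3 * l)) \<le> c * l powr \<tau>"
proof (cases "l \<le> (2 + real N) powr (2 / \<tau>)")
  case True
  then have "ln l \<le> ln ((2 + real N) powr (2 / \<tau>))"
    using \<open>1 \<le> l\<close> by (subst ln_le_cancel_iff) auto
  also have "\<dots> = 2 / \<tau> * ln (2 + real N)" by simp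
  finally have "ln l \<le> 2 / \<tau> * ln (2 + real N)" .
  moreover have "ln 3 \<le> ln (2 + real N)" using \<open>1 \<le> N\<close> by simp
  moreover have "ln (3 * l) = ln 3 + ln l" using \<open>1 \<le> l\<close> by (simp add: ln_mult)
  moreover have "(1 + 2 / \<tau>) * ln (2 + real N) = ln (2 + real N) + 2 / \<tau> * ln (2 + real N)"
    by (simp add: algebra_simps)
  ultimately have "ln (3 * l) \<le> (1 + 2 / \<tau>) * ln (2 + real N)" by linarith
  then have "(3 * d * real N) * ln (3 * l) \<le> (3 * d * real N) * ((1 + 2 / \<tau>) * ln (2 + real N))"
    by (intro mult_left_mono) auto
  then have "3 * d * (real N * ln (3 * l)) \<le> 3 * d * (1 + 2 / \<tau>) * (real N * ln (2 + real N))"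
    by (simp add: algebra_simps)
  also have "\<dots> \<le> c * K * (real N * ln (2 + real N))"
    using K by (intro mult_right_mono) auto
  also have "\<dots> \<le> c * l powr \<tau>"
    using KP \<open>0 < c\<close> by (simp add: mult.assoc)
  finally show ?thesis .
next
  case False
  have "2 + real N = ((2 + real N) powr (2 / \<tau>)) powr (\<tau> / 2)"
    using \<open>0 < \<tau>\<close> by (simp add: powr_powr)
  also have "\<dots> \<le> l powr (\<tau> / 2)"
    using False \<open>0 < \<tau>\<close> by (intro powr_mono2) auto
  finally have "real N \<le> l powr (\<tau> / 2)" by simp
  moreover have "0 \<le> ln (3 * l)" using \<open>1 \<le> l\<close> by simp
  ultimately have "3 * d * (real N * ln (3 * l)) \<le> 3 * d * (l powr (\<tau> / 2) * (c / (3 * d) * l powr (\<tau> / 2)))"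
    using log by (intro mult_left_mono mult_mono) auto
  also have "\<dots> = c * l powr \<tau>"
    using \<open>1 \<le> d\<close> by (simp add: powr_add[symmetric])
  finally show ?thesis .
qed

lemma prefactor_le_half_exp:
  fixes l m \<tau> \<gamma> \<beta> :: real
  assumes "1 \<le> N" "1 \<le> l"
    and expo: "2 * (real N * ln (real N)) + 3 * (real (N * d) * ln (3 * l)) + (m - m * l powr \<tau>) \<le>
      - (l powr (\<gamma> * \<beta>)) - ln 2"
  shows "(fact N * (2 * l + 1) ^ (N * d))\<^sup>2 * 3 ^ (N * d) * exp (m - m * l powr \<tau>) \<le>
    1 / 2 * exp (- ((l powr \<gamma>) powr \<beta>))"
proof -
  have "(fact N * (2 * l + 1) ^ (N * d))\<^sup>2 * 3 ^ (N * d) * exp (m - m * l powr \<tau>) \<le>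
      exp (2 * (real N * ln (real N)) + 3 * (real (N * d) * ln (3 * l))) * exp (m - m * l powr \<tau>)"
    using counting_factor_le_exp[OF assms(1,2), of d] by (intro mult_right_mono) auto
  also have "\<dots> \<le> exp (- (l powr (\<gamma> * \<beta>)) - ln 2)"
    using expo by (simp only: exp_add[symmetric] exp_le_cancel_iff)
  also have "\<dots> = 1 / 2 * exp (- ((l powr \<gamma>) powr \<beta>))"
    by (simp add: powr_powr exp_diff)
  finally show ?thesis .
qed

lemma one_le_nat_mult_ln: "1 \<le> N \<Longrightarrow> 1 \<le> real N * ln (2 + real N)"
proof -
  assume "1 \<le> N"
  have "1 \<le> ln (3::real)" using exp_le by (simp add: ln_ge_iff)
  also have "\<dots> \<le> ln (2 + real N)" using \<open>1 \<le> N\<close> by simp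
  finally have "1 * 1 \<le> real N * ln (2 + real N)" using \<open>1 \<le> N\<close> by (intro mult_mono) auto
  then show ?thesis by simp
qed

lemma powr_scale_lower_bounds:
  fixes C K X l \<tau> :: real
  assumes "0 < \<tau>" "0 < K" "1 \<le> X" "1 \<le> C" "K powr (1 / \<tau>) \<le> C" and l: "C * X powr (1 / \<tau>) \<le> l"
  shows "C \<le> l" and "K * X \<le> l powr \<tau>"
proof -
  have "1 \<le> X powr (1 / \<tau>)" using assms by (intro ge_one_powr_ge_zero) auto
  then have "C * 1 \<le> C * X powr (1 / \<tau>)" using \<open>1 \<le> C\<close> by (intro mult_left_mono) auto
  then show "C \<le> l" using l by simp
  have "K = (K powr (1 / \<tau>)) powr \<tau>" using assms by (simp add: powr_powr)
  also have "\<dots> \<le> C powr \<tau>" using assms by (intro powr_mono2) auto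
  finally have "K * X \<le> C powr \<tau> * X" using \<open>1 \<le> X\<close> by (intro mult_right_mono) auto
  also have "\<dots> = (C * X powr (1 / \<tau>)) powr \<tau>"
    using assms by (simp add: powr_mult powr_powr)
  also have "\<dots> \<le> l powr \<tau>" using assms by (intro powr_mono2) auto
  finally show "K * X \<le> l powr \<tau>" .
qed

lemma large_scale_condition:
  fixes m \<tau> \<gamma> \<beta> :: real and d :: nat
  assumes "0 < \<gamma> * \<beta>" "\<gamma> * \<beta> < \<tau>" "0 < m" "1 \<le> d"
  obtains C where "\<And>N l. 1 \<le> N \<Longrightarrow> 1 \<le> l \<Longrightarrow> C * (real N * ln (2 + real N)) powr (1 / \<tau>) \<le> l \<Longrightarrow>
    (fact N * (2 * l + 1) ^ (N * d))\<^sup>2 * 3 ^ (N * d) * exp (m - m * l powr \<tau>) \<le>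
      1 / 2 * exp (- ((l powr \<gamma>) powr \<beta>))"
proof -
  define c where "c = m / 4"
  have "0 < \<tau>" "0 < c" using assms unfolding c_def by auto
  obtain L where L: "\<And>l. L \<le> l \<Longrightarrow> ln 2 + m \<le> c * l powr \<tau> \<and> l powr (\<gamma> * \<beta>) \<le> c * l powr \<tau> \<and>
      ln (3 * l) \<le> c / (3 * d) * l powr (\<tau> / 2)"
    using large_scale_bounds[of "\<gamma> * \<beta>" \<tau> m "c / (3 * d)"] assms \<open>0 < c\<close> unfolding c_def by auto
  define K where "K = max 2 (3 * d * (1 + 2 / \<tau>)) / c"
  have "0 < K" unfolding K_def using \<open>0 < c\<close> by (simp add: less_max_iff_disj)
  have cK: "2 \<le> c * K" "3 * d * (1 + 2 / \<tau>) \<le> c * K" unfolding K_def using \<open>0 < c\<close> by auto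
  define C where "C = max (max 1 L) (K powr (1 / \<tau>))"
  show thesis
  proof (rule that)
    fix N :: nat and l :: real
    assume "1 \<le> N" "1 \<le> l" and lC: "C * (real N * ln (2 + real N)) powr (1 / \<tau>) \<le> l"
    define NL where "NL = real N * ln (2 + real N)"
    have "C \<le> l" and KP: "K * NL \<le> l powr \<tau>"
      using \<open>0 < \<tau>\<close> \<open>0 < K\<close> one_le_nat_mult_ln[OF \<open>1 \<le> N\<close>] _ _ lC unfolding NL_def
      by (rule powr_scale_lower_bounds; simp add: C_def)+
    then have bounds: "ln 2 + m \<le> c * l powr \<tau>" "l powr (\<gamma> * \<beta>) \<le> c * l powr \<tau>"
      "ln (3 * l) \<le> c / (3 * d) * l powr (\<tau> / 2)"
      using L[of l] unfolding C_def by auto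
    have "2 * (real N * ln (real N)) \<le> 2 * NL" unfolding NL_def using \<open>1 \<le> N\<close> by simp
    also have "\<dots> \<le> c * (K * NL)"
      using cK(1) one_le_nat_mult_ln[OF \<open>1 \<le> N\<close>] unfolding NL_def
      by (simp add: mult.assoc[symmetric] mult_right_mono)
    also have "\<dots> \<le> c * l powr \<tau>" using KP \<open>0 < c\<close> by (intro mult_left_mono) auto
    finally have "2 * (real N * ln (real N)) \<le> c * l powr \<tau>" .
    moreover have "3 * d * (real N * ln (3 * l)) \<le> c * l powr \<tau>"
      using \<open>0 < \<tau>\<close> \<open>0 < c\<close> \<open>1 \<le> N\<close> \<open>1 \<le> l\<close> \<open>1 \<le> d\<close> bounds(3) cK(2) KP[unfolded NL_def]
      by (rule particle_log_bound)
    ultimately show "(fact N * (2 * l + 1) ^ (N * d))\<^sup>2 * 3 ^ (N * d) * exp (m - m * l powr \<tau>) \<le>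
        1 / 2 * exp (- ((l powr \<gamma>) powr \<beta>))"
      using \<open>1 \<le> N\<close> \<open>1 \<le> l\<close> bounds(1,2) unfolding c_def
      by (intro prefactor_le_half_exp) (simp_all add: algebra_simps)
  qed
qed

theorem lemma3p6:
  fixes m \<tau> \<gamma> \<beta> :: real and d :: nat
  assumes "0 < \<beta>" "\<beta> < 1 / \<gamma>" "1 < \<gamma>" "\<gamma> < 2"
    and "max (\<gamma> * \<beta>) (1 / \<gamma>) < \<tau>" "\<tau> < 1"
    and "0 < m" "1 \<le> d"
  shows "\<exists>C::real. \<forall>(N::nat) (lam::real) \<V> \<U> \<Theta> (l::real) a (\<psi>::cfg \<Rightarrow> real) (\<mu>::real).
     1 \<le> N \<longrightarrow> 0 < lam \<longrightarrow> finite {z \<in> pointsZ d. \<U> z \<noteq> 0} \<longrightarrow>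
     \<Theta> \<subseteq> conf N d \<longrightarrow> symmetric_set N \<Theta> \<longrightarrow>
     1 \<le> l \<longrightarrow> a \<in> conf N d \<longrightarrow> box N d l a \<subseteq> \<Theta> \<longrightarrow>
     localizing_box N d \<tau> m lam \<V> \<U> l a \<longrightarrow>
     gen_eigenfunction N d lam \<V> \<U> \<Theta> \<psi> \<mu> \<longrightarrow>
     (\<forall>E \<in> spec_restr N d lam \<V> \<U> (box N d l a).
        cmod (complex_of_real \<mu> - E) \<ge> 1/2 * exp (- ((l powr \<gamma>) powr \<beta>))) \<longrightarrow>
     l \<ge> C * (real N * ln (2 + real N)) powr (1 / \<tau>) \<longrightarrow>
     (\<forall>y \<in> inner_part N d \<Theta> (box N d l a) (l powr ((1 + \<tau>) / 2)).
        \<bar>\<psi> y\<bar> \<le> Max (insert 0 ((\<lambda>v. exp (- (m * (1 - 3 * l powr (- (1 - \<tau>) / 2))) * dS N d y v) * \<bar>\<psi> v\<bar>)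
                        ` bdry_ex N d \<Theta> (box N d l a))))"
proof -
  have "0 < \<gamma> * \<beta>" "\<gamma> * \<beta> < \<tau>" using assms(1,3,5) by auto
  then obtain C where C: "\<And>N l. 1 \<le> N \<Longrightarrow> 1 \<le> l \<Longrightarrow> C * (real N * ln (2 + real N)) powr (1 / \<tau>) \<le> l \<Longrightarrow>
      (fact N * (2 * l + 1) ^ (N * d))\<^sup>2 * 3 ^ (N * d) * exp (m - m * l powr \<tau>) \<le>
        1 / 2 * exp (- ((l powr \<gamma>) powr \<beta>))"
    using assms(7,8) by (rule large_scale_condition) blast
  show ?thesis
  proof (intro exI[of _ C] allI impI ballI)
    fix N lam \<V> \<U> \<Theta> l a \<psi> \<mu> y
    assume "1 \<le> N" "0 < lam" "finite {z \<in> pointsZ d. \<U> z \<noteq> 0}" "\<Theta> \<subseteq> conf N d" "symmetric_set N \<Theta>"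
      "1 \<le> l" "a \<in> conf N d" "box N d l a \<subseteq> \<Theta>" "localizing_box N d \<tau> m lam \<V> \<U> l a"
      "gen_eigenfunction N d lam \<V> \<U> \<Theta> \<psi> \<mu>"
      "\<forall>E \<in> spec_restr N d lam \<V> \<U> (box N d l a). cmod (complex_of_real \<mu> - E) \<ge> 1/2 * exp (- ((l powr \<gamma>) powr \<beta>))"
      "l \<ge> C * (real N * ln (2 + real N)) powr (1 / \<tau>)"
      "y \<in> inner_part N d \<Theta> (box N d l a) (l powr ((1 + \<tau>) / 2))"
    moreover have "l powr (- (1 - \<tau>) / 2) * l powr ((1 + \<tau>) / 2) = l powr \<tau>"
      by (simp add: powr_add[symmetric] field_simps)
    ultimately show "\<bar>\<psi> y\<bar> \<le> Max (insert 0 ((\<lambda>v. exp (- (m * (1 - 3 * l powr (- (1 - \<tau>) / 2))) * dS N d y v) * \<bar>\<psi> v\<bar>)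
                        ` bdry_ex N d \<Theta> (box N d l a)))"
      using C assms(7) unfolding weighted_bdry_max_def[symmetric]
      by (intro interior_estimate[where \<delta> = "1 / 2 * exp (- ((l powr \<gamma>) powr \<beta>))"]) auto
  qed
qed

end
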